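(* Let $M=(S,\mathrm{Act},P)$ be an MDP, $T\subseteq S$, $\mathrm{opt}\in\{\min,\max\}$, and let $r\in\mathbb{N}_\infty^S$ satisfy $\tilde D^{\mathrm{opt}}(r)\le r$ (pointwise). Then for all $s\in S$: if $r(s)<\infty$ then $\Pr^{\mathrm{opt}}_s(\Diamond T)<1$.
   Context: An MDP is a tuple $M=(S,\mathrm{Act},P)$ with $S$ finite, $\mathrm{Act}$ finite, $P\colon S\times\mathrm{Act}\times S\to[0,1]$ with $\sum_{s'}P(s,a,s')\in\{0,1\}$; $\mathrm{Act}(s)=\{a\mid\sum_{s'}P(s,a,s')=1\}$ is nonempty for all $s$; $\mathrm{Post}(s,a)=\{s'\mid P(s,a,s')>0\}$. A strategy is $\sigma\colon S\to\mathrm{Act}$ with $\sigma(s)\in\mathrm{Act}(s)$, inducing a Markov chain with transitions $P(s,\sigma(s),\cdot)$; $\Pr^\sigma_s(\Diamond T)$ is the probability of visiting $T$ from $s$ and $\Pr^{\mathrm{opt}}_s(\Diamond T)=\mathrm{opt}_\sigma\Pr^\sigma_s(\Diamond T)$. $\mathbb{N}_\infty=\mathbb{N}\cup\{\infty\}$ with $\infty+1=\infty$. The complementary distance operator $\tilde D^{\mathrm{opt}}\colon\mathbb{N}_\infty^S\to\mathbb{N}_\infty^S$ is $\tilde D^{\mathrm{opt}}(r)(s)=\infty$ if $s\in T$, and for $s\notin T$: $\tilde D^{\mathrm{opt}}(r)(s)=\mathrm{opt}_{a\in\mathrm{Act}(s)}\big(\min_{s'\in\mathrm{Post}(s,a)}r(s')+[\exists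 u,v\in\mathrm{Post}(s,a)\colon r(u)\neq r(v)]\big)$, where $[\varphi]\in\{0,1\}$ is the Iverson bracket. *)

theory Defs
  imports Complex_Main "HOL-Library.Extended_Nat"
begin

definition is_mdp :: "('s::finite \<Rightarrow> 'a::finite \<Rightarrow> 's \<Rightarrow> real) \<Rightarrow> bool" where
  "is_mdp P \<longleftrightarrow>
     (\<forall>s a s'. 0 \<le> P s a s' \<and> P s a s' \<le> 1) \<and>
     (\<forall>s a. (\<Sum>s'\<in>UNIV. P s a s') \<in> {0, 1}) \<and>
     (\<forall>s. {a. (\<Sum>s'\<in>UNIV. P s a s') = 1} \<noteq> {})"

definition Act :: "('s::finite \<Rightarrow> 'a \<Rightarrow> 's \<Rightarrow> real) \<Rightarrow> 's \<Rightarrow> 'a set" where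
  "Act P s = {a. (\<Sum>s'\<in>UNIV. P s a s') = 1}"

definition Post :: "('s \<Rightarrow> 'a \<Rightarrow> 's \<Rightarrow> real) \<Rightarrow> 's \<Rightarrow> 'a \<Rightarrow> 's set" where
  "Post P s a = {s'. P s a s' > 0}"

definition strategies :: "('s::finite \<Rightarrow> 'a \<Rightarrow> 's \<Rightarrow> real) \<Rightarrow> ('s \<Rightarrow> 'a) set" where
  "strategies P = {\<sigma>. \<forall>s. \<sigma> s \<in> Act P s}"

fun reach_within :: "('s::finite \<Rightarrow> 'a \<Rightarrow> 's \<Rightarrow> real) \<Rightarrow> ('s \<Rightarrow> 'a) \<Rightarrow> 's set \<Rightarrow> nat \<Rightarrow> 's \<Rightarrow> real" where
  "reach_within P \<sigma> T 0 s = (if s \<in> T then 1 else 0)"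
| "reach_within P \<sigma> T (Suc n) s =
     (if s \<in> T then 1 else (\<Sum>s'\<in>UNIV. P s (\<sigma> s) s' * reach_within P \<sigma> T n s'))"

text \<open>Pr^\<sigma>_s(\<Diamond>T): probability of eventually visiting T = supremum (limit) of the
  step-bounded reachability probabilities (the event \<Diamond>T is the increasing union of
  the events \<Diamond>^{\<le>n} T).\<close>
definition reach_prob :: "('s::finite \<Rightarrow> 'a \<Rightarrow> 's \<Rightarrow> real) \<Rightarrow> ('s \<Rightarrow> 'a) \<Rightarrow> 's set \<Rightarrow> 's \<Rightarrow> real" where
  "reach_prob P \<sigma> T s = (SUP n. reach_within P \<sigma> T n s)"

datatype opt = OptMin | OptMax

definition opt_reach_prob :: "opt \<Rightarrow> ('s::finite \<Rightarrow> 'a \<Rightarrow> 's \<Rightarrow> real) \<Rightarrow> 's set \<Rightarrow> 's \<Rightarrow> real" where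
  "opt_reach_prob m P T s =
     (case m of OptMin \<Rightarrow> (INF \<sigma>\<in>strategies P. reach_prob P \<sigma> T s)
              | OptMax \<Rightarrow> (SUP \<sigma>\<in>strategies P. reach_prob P \<sigma> T s))"

definition opt_over :: "opt \<Rightarrow> enat set \<Rightarrow> enat" where
  "opt_over m X = (case m of OptMin \<Rightarrow> Min X | OptMax \<Rightarrow> Max X)"

definition Dtilde :: "opt \<Rightarrow> ('s::finite \<Rightarrow> 'a::finite \<Rightarrow> 's \<Rightarrow> real) \<Rightarrow> 's set \<Rightarrow> ('s \<Rightarrow> enat) \<Rightarrow> 's \<Rightarrow> enat" where
  "Dtilde m P T r s =
     (if s \<in> T then \<infinity>
      else opt_over m ((\<lambda>a. Min (r ` Post P s a)
                             + of_bool (\<exists>u\<in>Post P s a. \<exists>v\<in>Post P s a. r u \<noteq> r v)) ` Act P s))"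

end

theory Submission
  imports Defs
begin

text \<open>Fix a strategy \<sigma> that, at every state s with r(s) < \<infinity>, picks an action satisfying
  \<tilde>D(r)(s) \<le> r(s). Suppose some such state reaches T almost surely, and among all states
  reaching T almost surely take those of least r-value k < \<infinity>. Every successor of such a state
  again reaches T almost surely, hence has r-value at least k; the inequality then rules out
  the +1 term, so all successors have r-value exactly k. These states thus form a set that is
  closed under \<sigma> and disjoint from T, from which T is reached with probability 0, a
  contradiction. For opt = min a minimising choice of actions gives such a \<sigma>; for opt = max
  every strategy is one, and the maximum over the finitely many strategies is attained.\<close>

lemma eq_if_Min_plus_of_bool_le:
  fixes r :: "'b \<Rightarrow> enat"
  assumes "finite X" and lower: "\<forall>u\<in>X. k \<le> r u"
    and le: "Min (r ` X) + of_bool (\<exists>u\<in>X. \<exists>v\<in>X. r u \<noteq> r v) \<le> k"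
    and "u \<in> X"
  shows "r u = k"
proof -
  have "Min (r ` X) \<le> k"
    using le by (meson dual_order.trans le_iff_add)
  moreover have "k \<le> Min (r ` X)"
    using assms by (intro Min.boundedI) auto
  ultimately have Min_eq: "Min (r ` X) = k"
    by (rule antisym)
  have "\<not> (\<exists>u\<in>X. \<exists>v\<in>X. r u \<noteq> r v)"
  proof
    assume spread: "\<exists>u\<in>X. \<exists>v\<in>X. r u \<noteq> r v"
    then obtain u v where "u \<in> X" "v \<in> X" "r u \<noteq> r v" by blast
    with lower have "k \<noteq> \<infinity>"
      by (metis enat_ord_simps(5))
    moreover have "k + 1 \<le> k"
      using le Min_eq spread by simp
    ultimately show False by (cases k) auto
  qed
  then have "r ` X = {r u}"
    using \<open>u \<in> X\<close> by blast
  then show ?thesis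
    using Min_eq by simp
qed

lemma is_mdp_nonneg: "is_mdp P \<Longrightarrow> 0 \<le> P s a s'"
  by (simp add: is_mdp_def)

lemma is_mdp_Act_nonempty: "is_mdp P \<Longrightarrow> Act P s \<noteq> {}"
  by (simp add: is_mdp_def Act_def)

lemma strategies_nonempty:
  assumes "is_mdp P"
  shows "strategies P \<noteq> {}"
proof -
  have "(\<lambda>s. SOME a. a \<in> Act P s) \<in> strategies P"
    using is_mdp_Act_nonempty[OF assms] by (simp add: strategies_def some_in_eq)
  then show ?thesis by blast
qed

lemma ex_strategy_Min:
  fixes P :: "'s::finite \<Rightarrow> 'a::finite \<Rightarrow> 's \<Rightarrow> real" and f :: "'s \<Rightarrow> 'a \<Rightarrow> 'b::linorder"
  assumes "is_mdp P"
  shows "\<exists>\<sigma>\<in>strategies P. \<forall>s. f s (\<sigma> s) = Min (f s ` Act P s)"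
proof -
  have "\<forall>s. \<exists>a. a \<in> Act P s \<and> f s a = Min (f s ` Act P s)"
    using Min_in[of "f s ` Act P s" for s] is_mdp_Act_nonempty[OF assms] by fastforce
  then obtain \<sigma> where "\<forall>s. \<sigma> s \<in> Act P s \<and> f s (\<sigma> s) = Min (f s ` Act P s)"
    by metis
  then show ?thesis by (auto simp: strategies_def)
qed

definition Dtilde_act :: "('s \<Rightarrow> 'a \<Rightarrow> 's \<Rightarrow> real) \<Rightarrow> ('s \<Rightarrow> enat) \<Rightarrow> 's \<Rightarrow> 'a \<Rightarrow> enat" where
  "Dtilde_act P r s a =
     Min (r ` Post P s a) + of_bool (\<exists>u\<in>Post P s a. \<exists>v\<in>Post P s a. r u \<noteq> r v)"

lemma Dtilde_le_finite:
  assumes "Dtilde m P T r s \<le> r s" and "r s < \<infinity>"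
  shows "s \<notin> T" and "opt_over m (Dtilde_act P r s ` Act P s) \<le> r s"
proof -
  show "s \<notin> T"
    using assms by (auto simp: Dtilde_def)
  then show "opt_over m (Dtilde_act P r s ` Act P s) \<le> r s"
    using assms(1) by (simp add: Dtilde_def Dtilde_act_def)
qed

context
  fixes P :: "'s::finite \<Rightarrow> 'a::finite \<Rightarrow> 's \<Rightarrow> real" and \<sigma> :: "'s \<Rightarrow> 'a"
  assumes mdp: "is_mdp P" and strategy: "\<sigma> \<in> strategies P"
begin

lemma sum_transition_eq_1: "(\<Sum>s'\<in>UNIV. P s (\<sigma> s) s') = 1"
  using strategy by (auto simp: strategies_def Act_def)

lemma transition_eq_0_if_notin_Post: "s' \<notin> Post P s (\<sigma> s) \<Longrightarrow> P s (\<sigma> s) s' = 0"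
  using is_mdp_nonneg[OF mdp, of s "\<sigma> s" s'] by (simp add: Post_def)

lemma reach_within_le_1: "reach_within P \<sigma> T n s \<le> 1"
proof (induction n arbitrary: s)
  case (Suc n)
  have "(\<Sum>s'\<in>UNIV. P s (\<sigma> s) s' * reach_within P \<sigma> T n s') \<le> (\<Sum>s'\<in>UNIV. P s (\<sigma> s) s')"
    by (intro sum_mono) (simp add: Suc is_mdp_nonneg[OF mdp] mult_left_le)
  then show ?case
    by (simp add: sum_transition_eq_1)
qed simp

lemma reach_within_Suc_mono: "reach_within P \<sigma> T n s \<le> reach_within P \<sigma> T (Suc n) s"
proof (induction n arbitrary: s)
  case 0
  have "0 \<le> (\<Sum>s'\<in>UNIV. P s (\<sigma> s) s' * reach_within P \<sigma> T 0 s')"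
    by (intro sum_nonneg) (simp add: is_mdp_nonneg[OF mdp])
  then show ?case by simp
next
  case (Suc n)
  have "(\<Sum>s'\<in>UNIV. P s (\<sigma> s) s' * reach_within P \<sigma> T n s')
      \<le> (\<Sum>s'\<in>UNIV. P s (\<sigma> s) s' * reach_within P \<sigma> T (Suc n) s')"
    by (intro sum_mono mult_left_mono Suc is_mdp_nonneg[OF mdp])
  then show ?case
    by (simp only: reach_within.simps) simp
qed

lemma reach_within_tendsto: "(\<lambda>n. reach_within P \<sigma> T n s) \<longlonglongrightarrow> reach_prob P \<sigma> T s"
  unfolding reach_prob_def
proof (rule LIMSEQ_incseq_SUP)
  show "bdd_above (range (\<lambda>n. reach_within P \<sigma> T n s))"
    by (rule bdd_aboveI2) (rule reach_within_le_1)
  show "incseq (\<lambda>n. reach_within P \<sigma> T n s)"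
    using reach_within_Suc_mono by (rule incseq_SucI)
qed

lemma reach_prob_le_1: "reach_prob P \<sigma> T s \<le> 1"
  unfolding reach_prob_def by (intro cSUP_least reach_within_le_1) simp

lemma reach_prob_unfold:
  assumes "s \<notin> T"
  shows "reach_prob P \<sigma> T s = (\<Sum>s'\<in>UNIV. P s (\<sigma> s) s' * reach_prob P \<sigma> T s')"
proof -
  have "(\<lambda>n. reach_within P \<sigma> T (Suc n) s) \<longlonglongrightarrow> reach_prob P \<sigma> T s"
    using reach_within_tendsto by (rule LIMSEQ_Suc)
  moreover have "(\<lambda>n. \<Sum>s'\<in>UNIV. P s (\<sigma> s) s' * reach_within P \<sigma> T n s')
      \<longlonglongrightarrow> (\<Sum>s'\<in>UNIV. P s (\<sigma> s) s' * reach_prob P \<sigma> T s')"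
    by (intro tendsto_sum tendsto_mult tendsto_const reach_within_tendsto)
  ultimately show ?thesis
    using assms by (simp add: LIMSEQ_unique)
qed

lemma reach_prob_eq_1_Post:
  assumes "s \<notin> T" and "reach_prob P \<sigma> T s = 1" and "u \<in> Post P s (\<sigma> s)"
  shows "reach_prob P \<sigma> T u = 1"
proof (rule ccontr)
  assume "reach_prob P \<sigma> T u \<noteq> 1"
  with reach_prob_le_1 have "reach_prob P \<sigma> T u < 1"
    by (simp add: order_less_le)
  with assms(3) have pos: "0 < P s (\<sigma> s) u * (1 - reach_prob P \<sigma> T u)"
    by (simp add: Post_def)
  have "(\<Sum>s'\<in>UNIV. P s (\<sigma> s) s' * (1 - reach_prob P \<sigma> T s'))
      = (\<Sum>s'\<in>UNIV. P s (\<sigma> s) s') - (\<Sum>s'\<in>UNIV. P s (\<sigma> s) s' * reach_prob P \<sigma> T s')"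
    by (simp add: algebra_simps sum_subtractf)
  also have "\<dots> = 0"
    using assms(2) reach_prob_unfold[OF assms(1)] by (simp add: sum_transition_eq_1)
  finally have "P s (\<sigma> s) u * (1 - reach_prob P \<sigma> T u) = 0"
    using reach_prob_le_1 is_mdp_nonneg[OF mdp] by (subst (asm) sum_nonneg_eq_0_iff) auto
  with pos show False by simp
qed

lemma reach_prob_eq_0_if_closed:
  assumes closed: "\<forall>s\<in>C. s \<notin> T \<and> Post P s (\<sigma> s) \<subseteq> C" and "s \<in> C"
  shows "reach_prob P \<sigma> T s = 0"
proof -
  have "reach_within P \<sigma> T n s = 0" for n
    using \<open>s \<in> C\<close>
  proof (induction n arbitrary: s)
    case (Suc n)
    have "P s (\<sigma> s) s' * reach_within P \<sigma> T n s' = 0" for s'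
      using Suc closed transition_eq_0_if_notin_Post by (cases "s' \<in> Post P s (\<sigma> s)") auto
    with Suc.prems closed show ?case by (simp del: mult_eq_0_iff)
  qed (use closed in auto)
  then show ?thesis
    by (simp add: reach_prob_def)
qed

lemma Post_level_if_Dtilde_act_le:
  fixes r :: "'s \<Rightarrow> enat"
  assumes "s \<notin> T" and "reach_prob P \<sigma> T s = 1" and le: "Dtilde_act P r s (\<sigma> s) \<le> r s"
    and least: "\<forall>t. reach_prob P \<sigma> T t = 1 \<longrightarrow> r s \<le> r t"
    and "u \<in> Post P s (\<sigma> s)"
  shows "reach_prob P \<sigma> T u = 1 \<and> r u = r s"
proof -
  have Post_one: "\<forall>t\<in>Post P s (\<sigma> s). reach_prob P \<sigma> T t = 1"
    using reach_prob_eq_1_Post assms(1,2) by blast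
  with least have "\<forall>t\<in>Post P s (\<sigma> s). r s \<le> r t"
    by blast
  then have "r u = r s"
    using eq_if_Min_plus_of_bool_le[OF _ _ _ \<open>u \<in> Post P s (\<sigma> s)\<close>] le
    by (simp add: Dtilde_act_def)
  with Post_one \<open>u \<in> Post P s (\<sigma> s)\<close> show ?thesis
    by blast
qed

lemma reach_prob_less_1_if_Dtilde_act_le:
  fixes r :: "'s \<Rightarrow> enat"
  assumes compatible: "\<forall>s. r s < \<infinity> \<longrightarrow> s \<notin> T \<and> Dtilde_act P r s (\<sigma> s) \<le> r s"
    and "r s0 < \<infinity>"
  shows "reach_prob P \<sigma> T s0 < 1"
proof (rule ccontr)
  define Z where "Z = {s. reach_prob P \<sigma> T s = 1}"
  define k where "k = Min (r ` Z)"
  define C where "C = {s\<in>Z. r s = k}"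
  assume "\<not> reach_prob P \<sigma> T s0 < 1"
  with reach_prob_le_1[of T s0] have "s0 \<in> Z"
    by (simp add: Z_def)
  then have "k \<in> r ` Z" and "k \<le> r s0"
    unfolding k_def by (auto intro: Min_in Min_le)
  have "k < \<infinity>"
    using \<open>k \<le> r s0\<close> \<open>r s0 < \<infinity>\<close> by (rule le_less_trans)
  obtain s where "s \<in> C"
    using \<open>k \<in> r ` Z\<close> by (auto simp: C_def)
  have "s \<notin> T \<and> Post P s (\<sigma> s) \<subseteq> C" if "s \<in> C" for s
  proof -
    from that \<open>k < \<infinity>\<close> compatible have "s \<notin> T" and "Dtilde_act P r s (\<sigma> s) \<le> r s"
      by (auto simp: C_def)
    moreover have "\<forall>t. reach_prob P \<sigma> T t = 1 \<longrightarrow> r s \<le> r t"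
      using that by (auto simp: C_def Z_def k_def)
    ultimately show ?thesis
      using Post_level_if_Dtilde_act_le that by (auto simp: C_def Z_def)
  qed
  with \<open>s \<in> C\<close> have "reach_prob P \<sigma> T s = 0"
    by (intro reach_prob_eq_0_if_closed) auto
  with \<open>s \<in> C\<close> show False
    by (simp add: C_def Z_def)
qed

end

lemma opt_reach_prob_OptMin_le:
  fixes P :: "'s::finite \<Rightarrow> 'a::finite \<Rightarrow> 's \<Rightarrow> real"
  shows "\<sigma> \<in> strategies P \<Longrightarrow> opt_reach_prob OptMin P T s \<le> reach_prob P \<sigma> T s"
  by (auto simp: opt_reach_prob_def intro!: cINF_lower bdd_below_finite)

lemma opt_reach_prob_OptMax_attained:
  assumes "is_mdp P"
  shows "\<exists>\<sigma>\<in>strategies P. opt_reach_prob OptMax P T s = reach_prob P \<sigma> T s"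
proof -
  let ?R = "(\<lambda>\<sigma>. reach_prob P \<sigma> T s) ` strategies P"
  have "finite ?R" and "?R \<noteq> {}"
    using strategies_nonempty[OF assms] by auto
  then have "Sup ?R \<in> ?R"
    by (simp add: cSup_eq_Max)
  then show ?thesis by (auto simp: opt_reach_prob_def)
qed

lemma ex_strategy_opt_reach_prob_le:
  assumes "is_mdp P"
  shows "\<exists>\<sigma>\<in>strategies P. opt_reach_prob m P T s \<le> reach_prob P \<sigma> T s \<and>
    (\<forall>t. Dtilde_act P r t (\<sigma> t) \<le> opt_over m (Dtilde_act P r t ` Act P t))"
proof (cases m)
  case OptMin
  obtain \<sigma> where "\<sigma> \<in> strategies P"
    and "\<forall>t. Dtilde_act P r t (\<sigma> t) = Min (Dtilde_act P r t ` Act P t)"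
    using ex_strategy_Min[OF assms] by blast
  with OptMin show ?thesis
    by (auto simp: opt_over_def opt_reach_prob_OptMin_le intro!: bexI[of _ \<sigma>])
next
  case OptMax
  obtain \<sigma> where "\<sigma> \<in> strategies P" and "opt_reach_prob OptMax P T s = reach_prob P \<sigma> T s"
    using opt_reach_prob_OptMax_attained[OF assms] by blast
  moreover from \<open>\<sigma> \<in> strategies P\<close>
  have "\<forall>t. Dtilde_act P r t (\<sigma> t) \<le> Max (Dtilde_act P r t ` Act P t)"
    by (auto simp: strategies_def)
  ultimately show ?thesis
    using OptMax by (auto simp: opt_over_def intro!: bexI[of _ \<sigma>])
qed

theorem proposition2:
  fixes P :: "'s::finite \<Rightarrow> 'a::finite \<Rightarrow> 's \<Rightarrow> real"
    and T :: "'s set" and opt :: opt and r :: "'s \<Rightarrow> enat"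
  assumes "is_mdp P"
    and "\<forall>s. Dtilde opt P T r s \<le> r s"
  shows "\<forall>s. r s < \<infinity> \<longrightarrow> opt_reach_prob opt P T s < 1"
proof (intro allI impI)
  fix s assume "r s < \<infinity>"
  obtain \<sigma> where \<sigma>: "\<sigma> \<in> strategies P"
    and opt_le: "opt_reach_prob opt P T s \<le> reach_prob P \<sigma> T s"
    and act_le: "\<forall>t. Dtilde_act P r t (\<sigma> t) \<le> opt_over opt (Dtilde_act P r t ` Act P t)"
    using ex_strategy_opt_reach_prob_le[OF assms(1)] by blast
  have "\<forall>t. r t < \<infinity> \<longrightarrow> t \<notin> T \<and> Dtilde_act P r t (\<sigma> t) \<le> r t"
    using Dtilde_le_finite assms(2) act_le order_trans by blast
  then have "reach_prob P \<sigma> T s < 1"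
    using reach_prob_less_1_if_Dtilde_act_le[OF assms(1) \<sigma>] \<open>r s < \<infinity>\<close> by blast
  with opt_le show "opt_reach_prob opt P T s < 1"
    by simp
qed

end
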